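(* Let $n\ge3$, $n\ne4$, and for $a\in\mathbb{B}^n$ define on $\overline{\mathbb{B}^n}$ $$U_a(x)=\Big(\frac{1-|a|^2}{|a|^2|x|^2-2a\cdot x+1}\Big)^{\frac{n-4}2}+\frac{n-4}4(1-|x|^2)\Big(\frac{1-|a|^2}{|a|^2|x|^2-2a\cdot x+1}\Big)^{\frac{n-2}2}.$$ Then $U_a\in C^\infty(\overline{\mathbb{B}^n})$, $U_a>0$, and with $u=U_a|_{\mathbb{S}^{n-1}}$ it solves $$\Delta^2U_a=0\ \text{in }\mathbb{B}^n,\qquad \frac{\partial U_a}{\partial r}=-\frac{n-4}2u\ \text{on }\mathbb{S}^{n-1},\qquad \mathscr{B}_3^3U_a=\frac{n(n-2)(n-4)}4u^{\frac{n+2}{n-4}}\ \text{on }\mathbb{S}^{n-1}.$$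
   Context: For $U$ smooth on $\overline{\mathbb{B}^n}$ satisfying $\partial_rU=-\frac{n-4}2u$ on $\mathbb{S}^{n-1}$ with $u=U|_{\mathbb{S}^{n-1}}$, $$\mathscr{B}_3^3U=-\frac{\partial\Delta U}{\partial r}-\frac{n-4}2\frac{\partial^2U}{\partial r^2}-\frac n2\Delta_{\mathbb{S}^{n-1}}u+\frac{(n-4)(n^2-3n+4)}4u\quad\text{on }\mathbb{S}^{n-1}.$$ *)

theory Defs
  imports "HOL-Analysis.Analysis"
begin

definition partial_deriv :: "'n::finite \<Rightarrow> (real^'n \<Rightarrow> real) \<Rightarrow> real^'n \<Rightarrow> real" where
  "partial_deriv i f x = deriv (\<lambda>t. f (x + t *\<^sub>R axis i 1)) 0"

definition smooth_on_open :: "(real^'n::finite) set \<Rightarrow> (real^'n \<Rightarrow> real) \<Rightarrow> bool" where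
  "smooth_on_open S f \<longleftrightarrow> open S \<and>
     (\<forall>is. (foldr partial_deriv is f) differentiable_on S)"

definition smooth_on_closed_ball :: "(real^'n::finite \<Rightarrow> real) \<Rightarrow> bool" where
  "smooth_on_closed_ball f \<longleftrightarrow> (\<exists>S. cball 0 1 \<subseteq> S \<and> smooth_on_open S f)"

definition laplacian :: "(real^'n::finite \<Rightarrow> real) \<Rightarrow> real^'n \<Rightarrow> real" where
  "laplacian f x = (\<Sum>i\<in>UNIV. partial_deriv i (partial_deriv i f) x)"

text \<open>Radial derivatives at a point x (used for |x| = 1): d/dr f(r x) at r = 1.\<close>
definition radial_deriv :: "(real^'n::finite \<Rightarrow> real) \<Rightarrow> real^'n \<Rightarrow> real" where
  "radial_deriv f x = deriv (\<lambda>r. f (r *\<^sub>R x)) 1"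

definition radial_deriv2 :: "(real^'n::finite \<Rightarrow> real) \<Rightarrow> real^'n \<Rightarrow> real" where
  "radial_deriv2 f x = deriv (deriv (\<lambda>r. f (r *\<^sub>R x))) 1"

text \<open>Laplace-Beltrami operator of S^{n-1} applied to u = f restricted to the sphere:
  the Euclidean Laplacian of the 0-homogeneous extension y \<mapsto> u(y/|y|), at |x| = 1.\<close>
definition sphere_laplacian :: "(real^'n::finite \<Rightarrow> real) \<Rightarrow> real^'n \<Rightarrow> real" where
  "sphere_laplacian f x = laplacian (\<lambda>y. f (y /\<^sub>R norm y)) x"

text \<open>The boundary operator B_3^3 (for U with dU/dr = -(n-4)/2 u on the sphere).\<close>
definition B33 :: "(real^'n::finite \<Rightarrow> real) \<Rightarrow> real^'n \<Rightarrow> real" where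
  "B33 U x = (let n = real CARD('n) in
      - radial_deriv (laplacian U) x - (n - 4) / 2 * radial_deriv2 U x
      - n / 2 * sphere_laplacian U x + (n - 4) * (n\<^sup>2 - 3 * n + 4) / 4 * U x)"

definition U_bubble :: "real^'n::finite \<Rightarrow> real^'n \<Rightarrow> real" where
  "U_bubble a x = (let n = real CARD('n);
      q = (1 - (norm a)\<^sup>2) / ((norm a)\<^sup>2 * (norm x)\<^sup>2 - 2 * (a \<bullet> x) + 1) in
      q powr ((n - 4) / 2) + (n - 4) / 4 * (1 - (norm x)\<^sup>2) * q powr ((n - 2) / 2))"

end

theory Submission
  imports Defs
begin

text \<open>Write \<open>D(y) = |a|\<^sup>2|y|\<^sup>2 - 2a\<cdot>y + 1\<close>, which is positive near the closed ball, and
  \<open>p = (4 - n)/2\<close>. Then \<open>U\<^sub>a = C D\<^sup>p + (p/2)(1 - |a|\<^sup>2) C (|y|\<^sup>2 - 1) D\<^bsup>p-1\<^esup>\<close>, and the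
  Laplacian maps profiles \<open>(b\<^sub>0 + b\<^sub>1|y|\<^sup>2) D\<^sup>q\<close> to sums of profiles with exponents \<open>q\<close> and
  \<open>q - 1\<close>. For \<open>q = p\<close> the coefficients are such that \<open>\<Delta>U\<^sub>a\<close> is again a sum of two profiles
  and \<open>\<Delta>\<^sup>2U\<^sub>a = 0\<close>. On the sphere, radial derivatives reduce to derivatives in \<open>r\<close> of
  \<open>(b\<^sub>0 + b\<^sub>1r\<^sup>2)(|a|\<^sup>2r\<^sup>2 - 2tr + 1)\<^sup>q\<close> with \<open>t = a\<cdot>x\<close>, and \<open>U\<^sub>a\<close> restricted to the sphere is
  the zonal function \<open>C(|a|\<^sup>2 - 2t + 1)\<^sup>p\<close>, whose spherical Laplacian is computed from its
  derivatives in \<open>t\<close>. The boundary conditions are then identities between polynomials in \<open>t\<close>,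
  \<open>|a|\<^sup>2\<close>, \<open>p\<close> times a common power of \<open>D\<close>.\<close>

section \<open>Partial derivatives and the Laplacian\<close>

lemma partial_deriv_eqI:
  assumes "((\<lambda>h. f (y + h *\<^sub>R axis i 1)) has_real_derivative d) (at 0)"
  shows "partial_deriv i f y = d"
  using assms by (simp add: partial_deriv_def DERIV_imp_deriv)

lemma eventually_nhds_line_in_open:
  fixes y v :: "'a::real_normed_vector"
  assumes "open S" "y + t0 *\<^sub>R v \<in> S"
  shows "eventually (\<lambda>t. y + t *\<^sub>R v \<in> S) (nhds t0)"
proof -
  have "open {t::real. y + t *\<^sub>R v \<in> S}"
    using continuous_open_preimage[of UNIV "\<lambda>t. y + t *\<^sub>R v" S] assms(1)
    by (simp add: vimage_def continuous_intros)
  then show ?thesis using eventually_nhds_in_open assms(2) by fastforce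
qed

lemma partial_deriv_cong:
  fixes y :: "real^'n::finite"
  assumes "open S" "y \<in> S" "\<And>z. z \<in> S \<Longrightarrow> f z = g z"
  shows "partial_deriv i f y = partial_deriv i g y"
proof -
  have "eventually (\<lambda>h. y + h *\<^sub>R axis i 1 \<in> S) (nhds 0)"
    using eventually_nhds_line_in_open[OF assms(1)] assms(2) by simp
  then have "eventually (\<lambda>h. f (y + h *\<^sub>R axis i 1) = g (y + h *\<^sub>R axis i 1)) (nhds 0)"
    by eventually_elim (use assms(3) in auto)
  then show ?thesis unfolding partial_deriv_def by (rule deriv_cong_ev) simp
qed

lemma has_real_derivative_partial_deriv:
  fixes y :: "real^'n::finite"
  assumes "f differentiable (at y)"
  shows "((\<lambda>h. f (y + h *\<^sub>R axis i 1)) has_real_derivative partial_deriv i f y) (at 0)"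
proof -
  obtain f' where f': "(f has_derivative f') (at y)" using assms by (auto simp: differentiable_def)
  have "((\<lambda>h::real. y + h *\<^sub>R axis i 1) has_derivative (\<lambda>h. h *\<^sub>R axis i 1)) (at 0)"
    by (auto intro!: derivative_eq_intros)
  from has_derivative_compose[OF this] f'
  have "((\<lambda>h. f (y + h *\<^sub>R axis i 1)) has_derivative (\<lambda>h. f' (h *\<^sub>R axis i 1))) (at 0)"
    by simp
  moreover have "(\<lambda>h. f' (h *\<^sub>R axis i 1)) = (\<lambda>h. f' (axis i 1) * h)"
    using linear_cmul[OF has_derivative_linear[OF f']] by (auto simp: mult.commute)
  ultimately have "((\<lambda>h. f (y + h *\<^sub>R axis i 1)) has_real_derivative f' (axis i 1)) (at 0)"
    by (simp add: has_field_derivative_def)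
  with partial_deriv_eqI[OF this] show ?thesis by simp
qed

lemma partial_deriv_add:
  fixes y :: "real^'n::finite"
  assumes "f differentiable (at y)" "g differentiable (at y)"
  shows "partial_deriv i (\<lambda>z. f z + g z) y = partial_deriv i f y + partial_deriv i g y"
  using assms by (intro partial_deriv_eqI DERIV_add has_real_derivative_partial_deriv)

lemma laplacian_cong:
  fixes y :: "real^'n::finite"
  assumes "open S" "y \<in> S" "\<And>z. z \<in> S \<Longrightarrow> f z = g z"
  shows "laplacian f y = laplacian g y"
  unfolding laplacian_def
  by (intro sum.cong refl partial_deriv_cong[OF assms(1,2)])
     (use partial_deriv_cong[OF assms(1) _ assms(3)] in auto)

lemma laplacian_eqI:
  fixes y :: "real^'n::finite"
  assumes "open S" "y \<in> S"
    and "\<And>z i. z \<in> S \<Longrightarrow> ((\<lambda>h. f (z + h *\<^sub>R axis i 1)) has_real_derivative P z i) (at 0)"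
    and "\<And>i. ((\<lambda>h. P (y + h *\<^sub>R axis i 1) i) has_real_derivative Q i) (at 0)"
  shows "laplacian f y = (\<Sum>i\<in>UNIV. Q i)"
proof -
  have "partial_deriv i (partial_deriv i f) y = Q i" for i
  proof -
    have "partial_deriv i (partial_deriv i f) y = partial_deriv i (\<lambda>z. P z i) y"
      by (rule partial_deriv_cong[OF assms(1,2)]) (use partial_deriv_eqI[OF assms(3)] in auto)
    also have "\<dots> = Q i" by (rule partial_deriv_eqI[OF assms(4)])
    finally show ?thesis .
  qed
  then show ?thesis unfolding laplacian_def by simp
qed

section \<open>Smoothness of elementary functions\<close>

inductive elementary :: "(real^'n::finite) set \<Rightarrow> (real^'n \<Rightarrow> real) \<Rightarrow> bool" for S where
  elementary_const: "elementary S (\<lambda>x. c)"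
| elementary_coord: "elementary S (\<lambda>x. x $ j)"
| elementary_add: "elementary S f \<Longrightarrow> elementary S g \<Longrightarrow> elementary S (\<lambda>x. f x + g x)"
| elementary_mult: "elementary S f \<Longrightarrow> elementary S g \<Longrightarrow> elementary S (\<lambda>x. f x * g x)"
| elementary_powr: "elementary S f \<Longrightarrow> (\<forall>x\<in>S. 0 < f x) \<Longrightarrow> elementary S (\<lambda>x. f x powr p)"
| elementary_cong: "elementary S f \<Longrightarrow> (\<forall>x\<in>S. f x = g x) \<Longrightarrow> elementary S g"

lemma elementary_differentiable_partial_deriv:
  assumes "open S" "elementary S f"
  shows "(\<forall>x\<in>S. f differentiable (at x)) \<and> (\<forall>i. elementary S (partial_deriv i f))"
  using assms(2)
proof induction
  case (elementary_const c)
  have "partial_deriv i (\<lambda>x. c) y = 0" for i and y :: "real^'a"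
    by (rule partial_deriv_eqI) (auto intro!: derivative_eq_intros)
  then show ?case by (auto intro: elementary.elementary_const[of S 0, simplified])
next
  case (elementary_coord j)
  have "partial_deriv i (\<lambda>x. x $ j) y = (if j = i then 1 else 0)" for i and y :: "real^'a"
    by (rule partial_deriv_eqI) (auto simp: axis_def intro!: derivative_eq_intros)
  moreover have "(\<lambda>x::real^'a. x $ j) differentiable (at y)" for y
    using bounded_linear_vec_nth[of j] bounded_linear_imp_differentiable by blast
  ultimately show ?case by (auto intro: elementary.elementary_const)
next
  case (elementary_add f g)
  have "elementary S (partial_deriv i (\<lambda>x. f x + g x))" for i
    by (rule elementary.elementary_cong[of S "\<lambda>y. partial_deriv i f y + partial_deriv i g y"])
       (use elementary_add.IH in \<open>auto intro: elementary.elementary_add partial_deriv_add[symmetric]\<close>)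
  then show ?case using elementary_add.IH by (auto intro: differentiable_add)
next
  case (elementary_mult f g)
  have eq: "partial_deriv i (\<lambda>x. f x * g x) y
      = partial_deriv i f y * g y + f y * partial_deriv i g y" if "y \<in> S" for i y
    using that elementary_mult.IH
    by (intro partial_deriv_eqI) (auto intro!: derivative_eq_intros has_real_derivative_partial_deriv)
  have "elementary S (partial_deriv i (\<lambda>x. f x * g x))" for i
    by (rule elementary.elementary_cong[of S
          "\<lambda>y. partial_deriv i f y * g y + f y * partial_deriv i g y"])
       (use elementary_mult eq in \<open>auto intro!: elementary.elementary_add elementary.elementary_mult\<close>)
  then show ?case using elementary_mult.IH by (auto intro: differentiable_mult)
next
  case (elementary_powr f p)
  have eq: "partial_deriv i (\<lambda>x. f x powr p) y = p * f y powr (p - 1) * partial_deriv i f y"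
    if "y \<in> S" for i y
  proof (rule partial_deriv_eqI)
    have "((\<lambda>h. f (y + h *\<^sub>R axis i 1)) has_real_derivative partial_deriv i f y) (at 0)"
      using that elementary_powr.IH by (intro has_real_derivative_partial_deriv) auto
    from DERIV_fun_powr[OF this, of p] that elementary_powr.hyps(2)
    show "((\<lambda>h. f (y + h *\<^sub>R axis i 1) powr p) has_real_derivative
        p * f y powr (p - 1) * partial_deriv i f y) (at 0)"
      by simp
  qed
  have "elementary S (partial_deriv i (\<lambda>x. f x powr p))" for i
    by (rule elementary.elementary_cong[of S "\<lambda>y. p * f y powr (p - 1) * partial_deriv i f y"])
       (use elementary.elementary_mult[OF elementary.elementary_mult[OF elementary.elementary_const
          elementary.elementary_powr[OF elementary_powr.hyps]]] elementary_powr.IH eq in auto)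
  moreover have "(\<lambda>x. f x powr p) differentiable (at y)" if y: "y \<in> S" for y
  proof -
    obtain f' where "(f has_derivative f') (at y)"
      using y elementary_powr.IH by (auto simp: differentiable_def)
    from has_derivative_powr[OF this has_derivative_const, of p]
    show ?thesis using y elementary_powr.hyps(2) unfolding differentiable_def by blast
  qed
  ultimately show ?case by blast
next
  case (elementary_cong f g)
  have "g differentiable (at y)" if y: "y \<in> S" for y
  proof -
    obtain f' where "(f has_derivative f') (at y)"
      using y elementary_cong.IH by (auto simp: differentiable_def)
    then have "(g has_derivative f') (at y)"
      by (rule has_derivative_transform_within_open[OF _ assms(1) y]) (use elementary_cong.hyps in auto)
    then show ?thesis unfolding differentiable_def by blast
  qed
  moreover have "elementary S (partial_deriv i g)" for i
    by (rule elementary.elementary_cong[OF conjunct2[OF elementary_cong.IH, rule_format, of i]])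
       (use elementary_cong.hyps assms(1) in \<open>auto intro: partial_deriv_cong\<close>)
  ultimately show ?case by blast
qed

lemma smooth_on_open_elementary:
  assumes "open S" "elementary S f"
  shows "smooth_on_open S f"
proof -
  have "elementary S (foldr partial_deriv is f)" for "is"
    by (induction "is") (use assms elementary_differentiable_partial_deriv in auto)
  then have "(foldr partial_deriv is f) differentiable_on S" for "is"
    using elementary_differentiable_partial_deriv[OF assms(1)]
    by (simp add: differentiable_at_withinI differentiable_on_def)
  then show ?thesis using assms(1) by (simp add: smooth_on_open_def)
qed

lemma laplacian_add:
  fixes y :: "real^'n::finite"
  assumes "open S" "y \<in> S" "elementary S f" "elementary S g"
  shows "laplacian (\<lambda>z. f z + g z) y = laplacian f y + laplacian g y"
proof -
  note diff = elementary_differentiable_partial_deriv[OF assms(1)]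
  have "partial_deriv i (partial_deriv i (\<lambda>z. f z + g z)) y
      = partial_deriv i (\<lambda>z. partial_deriv i f z + partial_deriv i g z) y" for i
    by (rule partial_deriv_cong[OF assms(1,2)]) (use diff assms(3,4) in \<open>auto intro: partial_deriv_add\<close>)
  also have "\<dots> i = partial_deriv i (partial_deriv i f) y + partial_deriv i (partial_deriv i g) y" for i
    using diff assms by (intro partial_deriv_add) auto
  finally show ?thesis by (simp add: laplacian_def sum.distrib)
qed

lemma elementary_sum:
  assumes "finite I" "\<And>i. i \<in> I \<Longrightarrow> elementary S (f i)"
  shows "elementary S (\<lambda>x. \<Sum>i\<in>I. f i x)"
  using assms by (induction I rule: finite_induct) (auto intro: elementary.intros)

lemma elementary_inner:
  "elementary S (\<lambda>y. inner y y)" "elementary S (\<lambda>y. inner a y)"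
  by (rule elementary.elementary_cong[OF elementary_sum[of UNIV S "\<lambda>i y. y$i * y$i"]]
        elementary.elementary_cong[OF elementary_sum[of UNIV S "\<lambda>i y. a$i * y$i"]];
      auto intro: elementary.intros simp: inner_vec_def)+

section \<open>Profiles and their Laplacians\<close>

definition bubble_denom :: "real^'n::finite \<Rightarrow> real^'n \<Rightarrow> real" where
  "bubble_denom a y = inner a a * inner y y - 2 * inner a y + 1"

definition profile :: "real^'n::finite \<Rightarrow> real \<Rightarrow> real \<Rightarrow> real \<Rightarrow> real^'n \<Rightarrow> real" where
  "profile a b0 b1 p y = (b0 + b1 * inner y y) * bubble_denom a y powr p"

lemma bubble_denom_pos:
  fixes a y :: "real^'n::finite"
  assumes "norm a < 1" "norm y \<le> 1"
  shows "0 < bubble_denom a y"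
proof -
  define u where "u = norm a * norm y"
  have "inner a y \<le> u" unfolding u_def by (rule norm_cauchy_schwarz)
  moreover have "u < 1"
    using mult_left_mono[OF assms(2) norm_ge_zero, of a] assms(1) by (simp add: u_def)
  then have "0 < (1 - u)^2" by simp
  ultimately have "0 < u^2 - 2 * inner a y + 1" by (simp add: power2_eq_square algebra_simps)
  then show ?thesis
    by (simp add: bubble_denom_def u_def power_mult_distrib flip: power2_norm_eq_inner)
qed

lemma open_bubble_denom_pos: "open {y. 0 < bubble_denom a y}"
  unfolding bubble_denom_def by (intro open_Collect_less continuous_intros)

lemma elementary_profile: "elementary {y. 0 < bubble_denom a y} (profile a b0 b1 p)"
proof -
  have "elementary S (\<lambda>y. inner a a * inner y y + (-2) * inner a y + 1)" for S
    by (intro elementary_add elementary_mult elementary_const elementary_inner)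
  then have "elementary S (bubble_denom a)" for S
    by (rule elementary_cong) (simp add: bubble_denom_def)
  then show ?thesis
    unfolding profile_def
    by (intro elementary_add elementary_mult elementary_const elementary_inner elementary_powr) auto
qed

lemma bubble_denom_line:
  fixes y :: "real^'n::finite"
  shows "bubble_denom a (y + h *\<^sub>R axis i 1)
    = bubble_denom a y + h * (2 * inner a a * y$i - 2 * a$i) + inner a a * h^2"
  by (simp add: bubble_denom_def inner_add inner_axis inner_axis' inner_commute algebra_simps
      power2_eq_square)

lemma sum_bubble_denom_gradient:
  fixes a y :: "real^'n::finite"
  shows "(\<Sum>i\<in>UNIV. y$i * (2 * inner a a * y$i - 2 * a$i)) = 2 * inner a a * inner y y - 2 * inner a y"
    and "(\<Sum>i\<in>UNIV. (2 * inner a a * y$i - 2 * a$i)^2) = 4 * inner a a * bubble_denom a y"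
proof -
  define A where "A = inner a a"
  have "(\<Sum>i\<in>UNIV. y$i * (2 * A * y$i - 2 * a$i))
      = 2 * A * (\<Sum>i\<in>UNIV. y$i * y$i) - 2 * (\<Sum>i\<in>UNIV. a$i * y$i)"
    by (simp add: right_diff_distrib sum_subtractf sum_distrib_left mult_ac)
  then show "(\<Sum>i\<in>UNIV. y$i * (2 * inner a a * y$i - 2 * a$i))
      = 2 * inner a a * inner y y - 2 * inner a y"
    by (simp add: inner_vec_def A_def)
  have "(\<Sum>i\<in>UNIV. (2 * A * y$i - 2 * a$i)^2)
      = (\<Sum>i\<in>UNIV. 4 * A^2 * (y$i * y$i) - 8 * A * (a$i * y$i) + 4 * (a$i * a$i))"
    by (simp add: power2_eq_square algebra_simps)
  also have "\<dots> = 4 * A^2 * inner y y - 8 * A * inner a y + 4 * A"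
    unfolding A_def by (simp add: inner_vec_def sum_subtractf sum.distrib sum_distrib_left)
  also have "\<dots> = 4 * A * bubble_denom a y"
    by (simp add: bubble_denom_def A_def power2_eq_square algebra_simps)
  finally show "(\<Sum>i\<in>UNIV. (2 * inner a a * y$i - 2 * a$i)^2) = 4 * inner a a * bubble_denom a y"
    by (simp add: A_def)
qed

lemma laplacian_profile:
  fixes a y :: "real^'n::finite"
  assumes "0 < bubble_denom a y"
  shows "laplacian (profile a b0 b1 p) y
    = profile a (b1 * (2 * real CARD('n) + 4 * p)) 0 p y
      + profile a (2 * inner a a * p * (2 * p - 2 + real CARD('n)) * b0 - 4 * p * b1)
          (2 * inner a a * p * (2 * p + real CARD('n)) * b1) (p - 1) y"
proof -
  define n where "n = real CARD('n)"
  define A where "A = inner a a"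
  define D where "D z = bubble_denom a z" for z :: "real^'n"
  define g where "g z i = 2 * A * z$i - 2 * a$i" for z :: "real^'n" and i
  define B where "B z = b0 + b1 * inner z z" for z :: "real^'n"
  define P where "P z i = 2 * b1 * z$i * D z powr p + B z * p * D z powr (p - 1) * g z i" for z i
  define Q where "Q i = 2 * b1 * D y powr p + 4 * b1 * y$i * p * D y powr (p - 1) * g y i
      + B y * p * (p - 1) * D y powr (p - 2) * (g y i)^2 + B y * p * D y powr (p - 1) * (2 * A)"
    for i
  have line: "inner (z + h *\<^sub>R axis i 1) (z + h *\<^sub>R axis i 1) = inner z z + 2 * h * z$i + h^2"
    "(z + h *\<^sub>R axis i 1)$i = z$i + h" for z :: "real^'n" and h i
    by (simp_all add: inner_add inner_axis inner_axis' inner_commute algebra_simps power2_eq_square)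
  have DP: "((\<lambda>h. profile a b0 b1 p (z + h *\<^sub>R axis i 1)) has_real_derivative P z i) (at 0)"
    if "z \<in> {z. 0 < bubble_denom a z}" for z i
    unfolding profile_def bubble_denom_line line
    apply (rule derivative_eq_intros refl | (use that in simp; fail))+
    apply (simp add: P_def D_def B_def g_def A_def)
    done
  have DQ: "((\<lambda>h. P (y + h *\<^sub>R axis i 1) i) has_real_derivative Q i) (at 0)" for i
    unfolding P_def D_def bubble_denom_line line B_def g_def
    apply (rule derivative_eq_intros refl | (use assms in simp; fail))+
    apply (simp add: Q_def D_def B_def g_def A_def power2_eq_square algebra_simps)
    done
  define X where "X = D y powr (p - 1)"
  have Dy: "0 < D y" using assms by (simp add: D_def)
  have pw1: "D y powr p = D y * X" and pw2: "D y powr (p - 2) * D y = X"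
    using powr_add[of "D y" 1 "p - 1"] powr_add[of "D y" "p - 2" 1] Dy by (simp_all add: X_def)
  have pw2': "D y powr (p - 2) * (4 * A * D y) = 4 * A * X" using pw2 by (simp add: mult_ac)
  have sum_yg: "(\<Sum>i\<in>UNIV. y$i * g y i) = 2 * A * inner y y - 2 * inner a y"
    and sum_gg: "(\<Sum>i\<in>UNIV. (g y i)^2) = 4 * A * D y"
    using sum_bubble_denom_gradient[where a = a and y = y] by (simp_all add: g_def A_def D_def)
  have "laplacian (profile a b0 b1 p) y = (\<Sum>i\<in>UNIV. Q i)"
    by (rule laplacian_eqI[OF open_bubble_denom_pos _ DP DQ]) (use assms in simp)
  also have "\<dots> = n * (2 * b1 * D y powr p) + 4 * b1 * p * D y powr (p - 1) * (\<Sum>i\<in>UNIV. y$i * g y i)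
      + B y * p * (p - 1) * (D y powr (p - 2) * (\<Sum>i\<in>UNIV. (g y i)^2))
      + n * (B y * p * D y powr (p - 1) * (2 * A))"
    by (simp add: Q_def n_def sum.distrib sum_distrib_left mult_ac)
  also have "\<dots> = n * (2 * b1 * (D y * X)) + 4 * b1 * p * X * (2 * A * inner y y - 2 * inner a y)
      + B y * p * (p - 1) * (4 * A * X) + n * (B y * p * X * (2 * A))"
    unfolding sum_yg sum_gg pw2' pw1 X_def[symmetric] ..
  also have "\<dots> = profile a (b1 * (2 * n + 4 * p)) 0 p y
      + profile a (2 * A * p * (2 * p - 2 + n) * b0 - 4 * p * b1)
          (2 * A * p * (2 * p + n) * b1) (p - 1) y"
    unfolding profile_def D_def[symmetric] pw1 X_def[symmetric]
    by (simp add: B_def D_def bubble_denom_def A_def algebra_simps)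
  finally show ?thesis by (simp add: n_def A_def)
qed

text \<open>With \<open>p = (4 - n)/2\<close> and \<open>C = (1 - |a|\<^sup>2)\<^bsup>(n-4)/2\<^esup>\<close> this is \<open>U_bubble a\<close>, written in terms of
  \<open>D = bubble_denom a\<close> instead of the quotient \<open>(1 - |a|\<^sup>2)/D\<close>.\<close>
definition bubble_profile :: "real^'n::finite \<Rightarrow> real \<Rightarrow> real \<Rightarrow> real^'n \<Rightarrow> real" where
  "bubble_profile a C p y = profile a C 0 p y
     + profile a (- p / 2 * (1 - inner a a) * C) (p / 2 * (1 - inner a a) * C) (p - 1) y"

lemma elementary_bubble_profile: "elementary {y. 0 < bubble_denom a y} (bubble_profile a C p)"
  unfolding bubble_profile_def by (intro elementary_add elementary_profile)

lemma laplacian_bubble_profile: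
  fixes a y :: "real^'n::finite"
  assumes "real CARD('n) = 4 - 2 * p" "0 < bubble_denom a y"
  shows "laplacian (bubble_profile a C p) y
    = profile a (2 * p * (1 + inner a a) * C) 0 (p - 1) y
      + profile a (- 2 * p * (p - 1) * (1 - inner a a) * C)
          (2 * inner a a * p * (p - 1) * (1 - inner a a) * C) (p - 1 - 1) y"
proof -
  have "laplacian (bubble_profile a C p) y
      = laplacian (profile a C 0 p) y
        + laplacian (profile a (- p / 2 * (1 - inner a a) * C) (p / 2 * (1 - inner a a) * C) (p - 1)) y"
    unfolding bubble_profile_def
    by (rule laplacian_add[OF open_bubble_denom_pos _ elementary_profile elementary_profile])
       (use assms in simp)
  also have "\<dots> = profile a (2 * p * (1 + inner a a) * C) 0 (p - 1) y
      + profile a (- 2 * p * (p - 1) * (1 - inner a a) * C)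
          (2 * inner a a * p * (p - 1) * (1 - inner a a) * C) (p - 1 - 1) y"
    unfolding laplacian_profile[OF assms(2)] assms(1)
    by (simp add: profile_def field_simps)
  finally show ?thesis .
qed

lemma bilaplacian_bubble_profile:
  fixes a y :: "real^'n::finite"
  assumes "real CARD('n) = 4 - 2 * p" "0 < bubble_denom a y"
  shows "laplacian (laplacian (bubble_profile a C p)) y = 0"
proof -
  define E where "E = 2 * p * (1 + inner a a) * C"
  define F0 where "F0 = - 2 * p * (p - 1) * (1 - inner a a) * C"
  define F1 where "F1 = 2 * inner a a * p * (p - 1) * (1 - inner a a) * C"
  have "laplacian (laplacian (bubble_profile a C p)) y
      = laplacian (\<lambda>z. profile a E 0 (p - 1) z + profile a F0 F1 (p - 1 - 1) z) y"
    by (rule laplacian_cong[OF open_bubble_denom_pos])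
       (use assms laplacian_bubble_profile in \<open>auto simp: E_def F0_def F1_def\<close>)
  also have "\<dots> = laplacian (profile a E 0 (p - 1)) y + laplacian (profile a F0 F1 (p - 1 - 1)) y"
    by (rule laplacian_add[OF open_bubble_denom_pos _ elementary_profile elementary_profile])
       (use assms in simp)
  also have "\<dots> = 0"
    unfolding laplacian_profile[OF assms(2)] assms(1)
    by (simp add: profile_def E_def F0_def F1_def field_simps)
  finally show ?thesis .
qed

lemma bubble_profile_pos:
  fixes a y :: "real^'n::finite"
  assumes "norm a < 1" "norm y \<le> 1" "0 < C" "p < 2"
  shows "0 < bubble_profile a C p y"
proof -
  define D where "D = bubble_denom a y"
  define m where "m = (1 - inner y y) * (1 - inner a a)"
  have D: "0 < D" using bubble_denom_pos[OF assms(1,2)] by (simp add: D_def)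
  have "0 \<le> m"
    using assms(1,2) by (simp add: m_def dot_square_norm abs_square_le_1 less_imp_le)
  moreover have "m \<le> D"
  proof -
    have "0 \<le> inner (a - y) (a - y)" by simp
    then show ?thesis by (simp add: m_def D_def bubble_denom_def inner_diff inner_commute algebra_simps)
  qed
  ultimately have "p * m < 2 * D"
  proof (cases "p \<le> 0")
    case True
    with \<open>0 \<le> m\<close> have "p * m \<le> 0" by (simp add: mult_nonpos_nonneg)
    with D show ?thesis by simp
  next
    case False
    with \<open>m \<le> D\<close> have "p * m \<le> p * D" by simp
    also have "\<dots> < 2 * D" using D assms(4) by simp
    finally show ?thesis .
  qed
  then have "0 < D - p / 2 * m" by simp
  moreover have "bubble_profile a C p y = C * D powr (p - 1) * (D - p / 2 * m)"
    using powr_add[of D 1 "p - 1"] D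
    by (simp add: bubble_profile_def profile_def D_def[symmetric] m_def field_simps)
  ultimately show ?thesis using D assms(3) by simp
qed

lemma U_bubble_eq_bubble_profile:
  fixes a y :: "real^'n::finite"
  assumes "norm a < 1" "0 < bubble_denom a y"
  shows "U_bubble a y
    = bubble_profile a ((1 - inner a a) powr ((real CARD('n) - 4) / 2)) ((4 - real CARD('n)) / 2) y"
proof -
  define n where "n = real CARD('n)"
  define c where "c = 1 - inner a a"
  define D where "D = bubble_denom a y"
  have c: "0 < c" using assms(1) by (simp add: c_def dot_square_norm abs_square_less_1)
  have D: "0 < D" using assms(2) by (simp add: D_def)
  have q: "(1 - (norm a)\<^sup>2) / ((norm a)\<^sup>2 * (norm y)\<^sup>2 - 2 * (a \<bullet> y) + 1) = c / D"
    by (simp add: c_def D_def bubble_denom_def power2_norm_eq_inner)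
  have cD: "(c / D) powr e = c powr e * D powr (- e)" for e
    using c D by (simp add: powr_divide powr_minus_divide)
  have e1: "- ((n - 4) / 2) = (4 - n) / 2" and e2: "(n - 2) / 2 = 1 + (n - 4) / 2"
    and e3: "- ((n - 2) / 2) = (4 - n) / 2 - 1"
    by (simp_all add: field_simps)
  have "(c / D) powr ((n - 4) / 2) = c powr ((n - 4) / 2) * D powr ((4 - n) / 2)"
    unfolding cD e1 ..
  moreover have "(c / D) powr ((n - 2) / 2) = c * c powr ((n - 4) / 2) * D powr ((4 - n) / 2 - 1)"
    unfolding cD e3 by (subst e2) (simp add: powr_add c less_imp_le)
  ultimately show ?thesis
    unfolding U_bubble_def Let_def q n_def[symmetric]
    by (simp add: bubble_profile_def profile_def c_def[symmetric] D_def[symmetric]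
        power2_norm_eq_inner field_simps)
qed

section \<open>Radial derivatives on the sphere\<close>

definition ray_profile :: "real \<Rightarrow> real \<Rightarrow> real \<Rightarrow> real \<Rightarrow> real \<Rightarrow> real \<Rightarrow> real" where
  "ray_profile A t b0 b1 p r = (b0 + b1 * r^2) * (A * r^2 - 2 * t * r + 1) powr p"

definition ray_profile_deriv :: "real \<Rightarrow> real \<Rightarrow> real \<Rightarrow> real \<Rightarrow> real \<Rightarrow> real \<Rightarrow> real" where
  "ray_profile_deriv A t b0 b1 p r = 2 * b1 * r * (A * r^2 - 2 * t * r + 1) powr p
     + (b0 + b1 * r^2) * p * (A * r^2 - 2 * t * r + 1) powr (p - 1) * (2 * A * r - 2 * t)"

definition ray_profile_deriv2 :: "real \<Rightarrow> real \<Rightarrow> real \<Rightarrow> real \<Rightarrow> real \<Rightarrow> real \<Rightarrow> real" where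
  "ray_profile_deriv2 A t b0 b1 p r = 2 * b1 * (A * r^2 - 2 * t * r + 1) powr p
     + 4 * b1 * r * p * (A * r^2 - 2 * t * r + 1) powr (p - 1) * (2 * A * r - 2 * t)
     + (b0 + b1 * r^2) * p * (p - 1) * (A * r^2 - 2 * t * r + 1) powr (p - 2) * (2 * A * r - 2 * t)^2
     + (b0 + b1 * r^2) * p * (A * r^2 - 2 * t * r + 1) powr (p - 1) * (2 * A)"

lemma has_real_derivative_ray_profile:
  assumes "0 < A * r^2 - 2 * t * r + 1"
  shows "(ray_profile A t b0 b1 p has_real_derivative ray_profile_deriv A t b0 b1 p r) (at r)"
  unfolding ray_profile_def[abs_def]
  apply (rule derivative_eq_intros refl | (use assms in simp; fail))+
  apply (simp add: ray_profile_deriv_def)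
  done

lemma has_real_derivative_ray_profile_deriv:
  assumes "0 < A * r^2 - 2 * t * r + 1"
  shows "(ray_profile_deriv A t b0 b1 p has_real_derivative ray_profile_deriv2 A t b0 b1 p r) (at r)"
  unfolding ray_profile_deriv_def[abs_def]
  apply (rule derivative_eq_intros refl | (use assms in simp; fail))+
  apply (simp add: ray_profile_deriv2_def power2_eq_square algebra_simps)
  done

lemma bubble_denom_scaleR:
  fixes a x :: "real^'n::finite"
  assumes "norm x = 1"
  shows "bubble_denom a (r *\<^sub>R x) = inner a a * r^2 - 2 * inner a x * r + 1"
  using assms by (simp add: bubble_denom_def dot_square_norm power2_eq_square)

lemma profile_scaleR:
  fixes a x :: "real^'n::finite"
  assumes "norm x = 1"
  shows "profile a b0 b1 p (r *\<^sub>R x) = ray_profile (inner a a) (inner a x) b0 b1 p r"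
  using assms
  by (simp add: profile_def ray_profile_def bubble_denom_scaleR dot_square_norm power2_eq_square)

lemma radial_derivs_profiles:
  fixes a x :: "real^'n::finite"
  assumes x: "norm x = 1" and pos: "0 < bubble_denom a x"
    and f: "\<And>z. 0 < bubble_denom a z \<Longrightarrow> f z = profile a b0 b1 p z + profile a c0 c1 q z"
  defines "A \<equiv> inner a a" and "t \<equiv> inner a x"
  shows "radial_deriv f x = ray_profile_deriv A t b0 b1 p 1 + ray_profile_deriv A t c0 c1 q 1"
    and "radial_deriv2 f x = ray_profile_deriv2 A t b0 b1 p 1 + ray_profile_deriv2 A t c0 c1 q 1"
proof -
  have ray: "f (r *\<^sub>R x) = ray_profile A t b0 b1 p r + ray_profile A t c0 c1 q r"
    if "0 < A * r^2 - 2 * t * r + 1" for r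
    using that f[of "r *\<^sub>R x"] by (simp add: bubble_denom_scaleR[OF x] profile_scaleR[OF x] A_def t_def)
  have near: "eventually (\<lambda>s. 0 < A * s^2 - 2 * t * s + 1) (nhds r)"
    if "0 < A * r^2 - 2 * t * r + 1" for r
    using eventually_nhds_in_open[of "{s. 0 < A * s^2 - 2 * t * s + 1}" r] that
    by (simp add: open_Collect_less continuous_intros)
  have deriv_ray: "deriv (\<lambda>r. f (r *\<^sub>R x)) r
      = ray_profile_deriv A t b0 b1 p r + ray_profile_deriv A t c0 c1 q r"
    if r: "0 < A * r^2 - 2 * t * r + 1" for r
  proof -
    have "deriv (\<lambda>r. f (r *\<^sub>R x)) r
        = deriv (\<lambda>r. ray_profile A t b0 b1 p r + ray_profile A t c0 c1 q r) r"
      by (rule deriv_cong_ev[OF _ refl]) (use near[OF r] in \<open>eventually_elim\<close>, use ray in auto)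
    also have "\<dots> = ray_profile_deriv A t b0 b1 p r + ray_profile_deriv A t c0 c1 q r"
      by (intro DERIV_imp_deriv DERIV_add has_real_derivative_ray_profile r)
    finally show ?thesis .
  qed
  have one: "0 < A * 1^2 - 2 * t * 1 + 1"
    using pos bubble_denom_scaleR[OF x, of a 1] by (simp add: A_def t_def)
  show "radial_deriv f x = ray_profile_deriv A t b0 b1 p 1 + ray_profile_deriv A t c0 c1 q 1"
    unfolding radial_deriv_def by (rule deriv_ray[OF one])
  have "radial_deriv2 f x
      = deriv (\<lambda>r. ray_profile_deriv A t b0 b1 p r + ray_profile_deriv A t c0 c1 q r) 1"
    unfolding radial_deriv2_def
    by (rule deriv_cong_ev[OF _ refl]) (use near[OF one] in \<open>eventually_elim\<close>, use deriv_ray in auto)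
  also have "\<dots> = ray_profile_deriv2 A t b0 b1 p 1 + ray_profile_deriv2 A t c0 c1 q 1"
    by (intro DERIV_imp_deriv DERIV_add has_real_derivative_ray_profile_deriv one)
  finally show "radial_deriv2 f x
      = ray_profile_deriv2 A t b0 b1 p 1 + ray_profile_deriv2 A t c0 c1 q 1" .
qed

lemma bubble_profile_sphere:
  fixes a x :: "real^'n::finite"
  assumes "norm x = 1"
  shows "bubble_profile a C p x = C * (inner a a - 2 * inner a x + 1) powr p"
  using profile_scaleR[OF assms, of a _ _ _ 1]
  by (simp add: bubble_profile_def ray_profile_def)

lemma radial_deriv_bubble_profile:
  fixes a x :: "real^'n::finite"
  assumes x: "norm x = 1" and pos: "0 < bubble_denom a x"
    and f: "\<And>z. 0 < bubble_denom a z \<Longrightarrow> f z = bubble_profile a C p z"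
  shows "radial_deriv f x = p * f x"
proof -
  define D where "D = inner a a - 2 * inner a x + 1"
  have D: "0 < D" using pos bubble_denom_scaleR[OF x, of a 1] by (simp add: D_def)
  have "radial_deriv f x = C * p * D powr (p - 1) * (2 * inner a a - 2 * inner a x)
      + p * (1 - inner a a) * C * D powr (p - 1)"
    using radial_derivs_profiles(1)[OF x pos f[unfolded bubble_profile_def]]
    by (simp add: ray_profile_deriv_def D_def)
  also have "\<dots> = p * (C * D powr p)"
  proof -
    define X where "X = D powr (p - 1)"
    have DX: "D powr p = D * X" using powr_add[of D 1 "p - 1"] D by (simp add: X_def)
    show ?thesis unfolding DX X_def[symmetric] by (simp add: D_def algebra_simps)
  qed
  also have "C * D powr p = f x"
    using f[OF pos] bubble_profile_sphere[OF x] by (simp add: D_def)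
  finally show ?thesis .
qed

section \<open>The spherical Laplacian of zonal functions\<close>

lemma abs_inner_div_norm_le:
  fixes a z :: "real^'n::finite"
  shows "\<bar>inner a z / norm z\<bar> \<le> norm a"
proof (cases "z = 0")
  case False
  then show ?thesis using Cauchy_Schwarz_ineq2[of a z] by (simp add: abs_div divide_le_eq)
qed simp

lemma line_inner_norm:
  fixes y :: "real^'n::finite"
  shows "inner a (y + h *\<^sub>R axis i 1) = inner a y + h * a$i"
    and "norm (y + h *\<^sub>R axis i 1) = sqrt (inner y y + 2 * h * y$i + h^2)"
  by (simp_all add: norm_eq_sqrt_inner inner_add inner_axis inner_axis' inner_commute algebra_simps
      power2_eq_square)

lemma has_real_derivative_inner_div_norm_line:
  fixes a z :: "real^'n::finite"
  assumes "z \<noteq> 0"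
  shows "((\<lambda>h. inner a (z + h *\<^sub>R axis i 1) / norm (z + h *\<^sub>R axis i 1)) has_real_derivative
     a$i / norm z - inner a z * z$i / norm z ^ 3) (at 0)"
proof -
  have pos: "0 < inner z z" using assms by simp
  show ?thesis unfolding line_inner_norm norm_eq_sqrt_inner[of z]
    apply (rule derivative_eq_intros refl | (use pos in simp; fail))+
    using pos apply (simp add: field_simps power3_eq_cube)
    done
qed

lemma has_real_derivative_inner_div_norm_line_deriv:
  fixes a x :: "real^'n::finite"
  assumes "norm x = 1"
  shows "((\<lambda>h. a$i / norm (x + h *\<^sub>R axis i 1)
        - inner a (x + h *\<^sub>R axis i 1) * (x + h *\<^sub>R axis i 1)$i / norm (x + h *\<^sub>R axis i 1) ^ 3)
     has_real_derivative - 2 * a$i * x$i - inner a x + 3 * inner a x * (x$i)^2) (at 0)"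
proof -
  have "inner x x = 1" using assms by (simp add: dot_square_norm)
  then show ?thesis unfolding line_inner_norm
    apply simp
    apply (rule derivative_eq_intros refl | (simp; fail))+
    apply (simp add: field_simps power2_eq_square)
    done
qed

lemma laplacian_zonal:
  fixes a x :: "real^'n::finite"
  assumes x: "norm x = 1"
    and w: "\<And>\<tau>. \<bar>\<tau>\<bar> \<le> norm a \<Longrightarrow> (w has_real_derivative w1 \<tau>) (at \<tau>)"
    and w1: "\<And>\<tau>. \<bar>\<tau>\<bar> \<le> norm a \<Longrightarrow> (w1 has_real_derivative w2 \<tau>) (at \<tau>)"
  shows "laplacian (\<lambda>y. w (inner a y / norm y)) x
     = w2 (inner a x) * (inner a a - (inner a x)^2) + (1 - real CARD('n)) * inner a x * w1 (inner a x)"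
proof -
  define t where "t = inner a x"
  define P where "P z i = w1 (inner a z / norm z) * (a$i / norm z - inner a z * z$i / norm z ^ 3)"
    for z :: "real^'n" and i
  define Q where "Q i = w2 t * (a$i - t * x$i)^2 + w1 t * (- 2 * a$i * x$i - t + 3 * t * (x$i)^2)" for i
  have x0: "x \<noteq> 0" using x by auto
  have DP: "((\<lambda>h. w (inner a (z + h *\<^sub>R axis i 1) / norm (z + h *\<^sub>R axis i 1)))
      has_real_derivative P z i) (at 0)"
    if "z \<in> - {0}" for z i
  proof -
    have "(w has_real_derivative w1 (inner a z / norm z))
        (at (inner a (z + 0 *\<^sub>R axis i 1) / norm (z + 0 *\<^sub>R axis i 1)))"
      using w[OF abs_inner_div_norm_le[of a z]] by simp
    from DERIV_chain2[OF this has_real_derivative_inner_div_norm_line] that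
    show ?thesis by (simp add: P_def)
  qed
  have DQ: "((\<lambda>h. P (x + h *\<^sub>R axis i 1) i) has_real_derivative Q i) (at 0)" for i
  proof -
    have "(w1 has_real_derivative w2 t) (at (inner a (x + 0 *\<^sub>R axis i 1) / norm (x + 0 *\<^sub>R axis i 1)))"
      using w1[OF abs_inner_div_norm_le[of a x]] x by (simp add: t_def)
    from DERIV_mult[OF DERIV_chain2[OF this has_real_derivative_inner_div_norm_line[OF x0]]
        has_real_derivative_inner_div_norm_line_deriv[OF x]]
    show ?thesis unfolding P_def
      by (rule DERIV_cong) (use x in \<open>simp add: Q_def t_def power2_eq_square algebra_simps\<close>)
  qed
  have "laplacian (\<lambda>y. w (inner a y / norm y)) x = (\<Sum>i\<in>UNIV. Q i)"
    by (rule laplacian_eqI[OF open_Compl[OF closed_singleton] _ DP DQ]) (use x0 in auto)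
  also have "\<dots> = w2 t * (inner a a - 2 * t * inner a x + t^2 * inner x x)
      + w1 t * (- 2 * inner a x - real CARD('n) * t + 3 * t * inner x x)"
    by (simp add: Q_def inner_vec_def power2_eq_square algebra_simps sum.distrib sum_subtractf sum_negf
        sum_distrib_left)
  also have "\<dots> = w2 t * (inner a a - t^2) + (1 - real CARD('n)) * t * w1 t"
    using x by (simp add: t_def dot_square_norm power2_eq_square algebra_simps)
  finally show ?thesis by (simp add: t_def)
qed

lemma sphere_laplacian_bubble_profile:
  fixes a x :: "real^'n::finite"
  assumes a: "norm a < 1" and x: "norm x = 1"
    and f: "\<And>z. 0 < bubble_denom a z \<Longrightarrow> f z = bubble_profile a C p z"
  defines "A \<equiv> inner a a" and "t \<equiv> inner a x"
  shows "sphere_laplacian f x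
    = 4 * C * p * (p - 1) * (A - 2 * t + 1) powr (p - 2) * (A - t^2)
      - 2 * (1 - real CARD('n)) * t * C * p * (A - 2 * t + 1) powr (p - 1)"
proof -
  define w where "w \<tau> = C * (A - 2 * \<tau> + 1) powr p" for \<tau>
  define w1 where "w1 \<tau> = - 2 * C * p * (A - 2 * \<tau> + 1) powr (p - 1)" for \<tau>
  define w2 where "w2 \<tau> = 4 * C * p * (p - 1) * (A - 2 * \<tau> + 1) powr (p - 2)" for \<tau>
  have pos: "0 < A - 2 * \<tau> + 1" if "\<bar>\<tau>\<bar> \<le> norm a" for \<tau>
  proof -
    have "0 < (1 - norm a)^2" using a by simp
    moreover have "A = norm a * norm a" by (simp add: A_def flip: dot_square_norm power2_eq_square)
    ultimately show ?thesis
      using that by (simp add: power2_eq_square algebra_simps)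
  qed
  have w: "(w has_real_derivative w1 \<tau>) (at \<tau>)" if "\<bar>\<tau>\<bar> \<le> norm a" for \<tau>
    unfolding w_def w1_def
    by (rule derivative_eq_intros refl | (use pos[OF that] in simp; fail))+
  have w1: "(w1 has_real_derivative w2 \<tau>) (at \<tau>)" if "\<bar>\<tau>\<bar> \<le> norm a" for \<tau>
    unfolding w1_def w2_def
    by (rule derivative_eq_intros refl | (use pos[OF that] in simp; fail))+
  have "f (y /\<^sub>R norm y) = w (inner a y / norm y)" if "y \<in> - {0}" for y
  proof -
    have y: "norm (y /\<^sub>R norm y) = 1" using that by simp
    then have "f (y /\<^sub>R norm y) = bubble_profile a C p (y /\<^sub>R norm y)"
      using f bubble_denom_pos[OF a] by simp
    then show ?thesis
      by (simp add: bubble_profile_sphere[OF y] w_def A_def divide_inverse mult.commute)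
  qed
  then have "sphere_laplacian f x = laplacian (\<lambda>y. w (inner a y / norm y)) x"
    unfolding sphere_laplacian_def
    by (intro laplacian_cong[OF open_Compl[OF closed_singleton]]) (use x in auto)
  also have "\<dots> = w2 t * (A - t^2) + (1 - real CARD('n)) * t * w1 t"
    using laplacian_zonal[OF x w w1] by (simp add: A_def t_def)
  finally show ?thesis by (simp add: w1_def w2_def)
qed

lemma B33_bubble_profile:
  fixes a x :: "real^'n::finite"
  assumes n: "real CARD('n) = 4 - 2 * p" and a: "norm a < 1" and x: "norm x = 1"
    and f: "\<And>z. 0 < bubble_denom a z \<Longrightarrow> f z = bubble_profile a C p z"
  shows "B33 f x = real CARD('n) * (real CARD('n) - 2) * (real CARD('n) - 4) / 4
    * C * (1 - inner a a)^3 * bubble_denom a x powr (p - 3)"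
proof -
  define A where "A = inner a a"
  define t where "t = inner a x"
  define D where "D = A - 2 * t + 1"
  define P where "P = D powr (p - 3)"
  have pos: "0 < bubble_denom a x" using bubble_denom_pos[OF a] x by simp
  have Dx: "bubble_denom a x = D"
    using bubble_denom_scaleR[OF x, of a 1] by (simp add: D_def A_def t_def)
  have D: "0 < D" using pos Dx by simp
  have Dk: "D powr (p - 3 + real k) = D^k * P" for k
    using D by (simp add: P_def powr_add powr_realpow)
  have pw: "D powr p = D^3 * P" "D powr (p - 1) = D^2 * P" "D powr (p - 2) = D * P"
    "D powr (p - 1 - 1) = D * P" "D powr (p - 1 - 2) = P" "D powr (p - 1 - 1 - 1) = P"
    "D powr (p - 3) = P"
    using Dk[of 3] Dk[of 2] Dk[of 1] Dk[of 0] by (simp_all add: P_def)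
  have r1: "A * 1\<^sup>2 - 2 * t * 1 + 1 = D" by (simp add: D_def)
  have fx: "f x = C * D^3 * P"
    using f[OF pos] bubble_profile_sphere[OF x] pw by (simp add: D_def A_def t_def)
  have lap: "laplacian f z = profile a (2 * p * (1 + A) * C) 0 (p - 1) z
      + profile a (- 2 * p * (p - 1) * (1 - A) * C) (2 * A * p * (p - 1) * (1 - A) * C) (p - 1 - 1) z"
    if "0 < bubble_denom a z" for z
  proof -
    have "laplacian f z = laplacian (bubble_profile a C p) z"
      by (rule laplacian_cong[OF open_bubble_denom_pos]) (use that f in auto)
    then show ?thesis using laplacian_bubble_profile[OF n that] by (simp add: A_def)
  qed
  note rad_lap = radial_derivs_profiles(1)[OF x pos lap]
  note rad2 = radial_derivs_profiles(2)[OF x pos f[unfolded bubble_profile_def]]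
  note sph = sphere_laplacian_bubble_profile[OF a x f]
  show ?thesis
    unfolding B33_def Let_def
    apply (simp only: rad_lap rad2 sph fx Dx n)
    unfolding ray_profile_deriv_def ray_profile_deriv2_def A_def[symmetric] t_def[symmetric] r1
      D_def[symmetric] pw
    unfolding D_def
    by (simp add: field_simps power2_eq_square power3_eq_cube)
qed

lemma smooth_on_closed_ball_U_bubble:
  fixes a :: "real^'n::finite"
  assumes "norm a < 1"
  shows "smooth_on_closed_ball (U_bubble a)"
proof -
  have "elementary {y. 0 < bubble_denom a y} (U_bubble a)"
    by (rule elementary_cong[OF elementary_bubble_profile])
       (use U_bubble_eq_bubble_profile[OF assms] in auto)
  then show ?thesis
    unfolding smooth_on_closed_ball_def
    by (intro exI[of _ "{y. 0 < bubble_denom a y}"] conjI smooth_on_open_elementary)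
       (use bubble_denom_pos[OF assms] open_bubble_denom_pos in auto)
qed

text \<open>Valid in every dimension, since the exponent \<open>(4 - n)/2\<close> is below \<open>2\<close>.\<close>
lemma U_bubble_pos:
  fixes a y :: "real^'n::finite"
  assumes "norm a < 1" "norm y \<le> 1"
  shows "0 < U_bubble a y"
proof -
  have "inner a a < 1" using assms(1) by (simp add: dot_square_norm abs_square_less_1)
  then have "0 < (1 - inner a a) powr ((real CARD('n) - 4) / 2)" by simp
  then show ?thesis
    using U_bubble_eq_bubble_profile[OF assms(1) bubble_denom_pos[OF assms]]
      bubble_profile_pos[OF assms] by simp
qed

lemma bilaplacian_U_bubble:
  fixes a y :: "real^'n::finite"
  assumes a: "norm a < 1" and y: "norm y < 1"
  shows "laplacian (laplacian (U_bubble a)) y = 0"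
proof -
  define S where "S = {y. 0 < bubble_denom a (y::real^'n)}"
  define C where "C = (1 - inner a a) powr ((real CARD('n) - 4) / 2)"
  define p where "p = (4 - real CARD('n)) / 2"
  have S: "open S" unfolding S_def by (rule open_bubble_denom_pos)
  have yS: "y \<in> S" using bubble_denom_pos[OF a] y by (simp add: S_def)
  have U: "\<And>z. z \<in> S \<Longrightarrow> U_bubble a z = bubble_profile a C p z"
    using U_bubble_eq_bubble_profile[OF a] by (simp add: S_def C_def p_def)
  have lap: "laplacian (U_bubble a) z = laplacian (bubble_profile a C p) z" if "z \<in> S" for z
    by (rule laplacian_cong[OF S that U])
  have "laplacian (laplacian (U_bubble a)) y = laplacian (laplacian (bubble_profile a C p)) y"
    by (rule laplacian_cong[OF S yS lap])
  also have "\<dots> = 0"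
    by (rule bilaplacian_bubble_profile) (use yS in \<open>simp_all add: S_def p_def field_simps\<close>)
  finally show ?thesis .
qed

lemma radial_deriv_U_bubble:
  fixes a x :: "real^'n::finite"
  assumes a: "norm a < 1" and x: "norm x = 1"
  shows "radial_deriv (U_bubble a) x = - (real CARD('n) - 4) / 2 * U_bubble a x"
  using radial_deriv_bubble_profile[OF x bubble_denom_pos[OF a] U_bubble_eq_bubble_profile[OF a]] x
  by simp

lemma B33_U_bubble:
  fixes a x :: "real^'n::finite"
  assumes a: "norm a < 1" and x: "norm x = 1" and n4: "CARD('n) \<noteq> 4"
  shows "B33 (U_bubble a) x = real CARD('n) * (real CARD('n) - 2) * (real CARD('n) - 4) / 4
    * U_bubble a x powr ((real CARD('n) + 2) / (real CARD('n) - 4))"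
proof -
  define n where "n = real CARD('n)"
  define c where "c = 1 - inner a a"
  define C where "C = c powr ((n - 4) / 2)"
  define D where "D = bubble_denom a x"
  have c: "0 < c" using a by (simp add: c_def dot_square_norm abs_square_less_1)
  have D: "0 < D" using bubble_denom_pos[OF a] x by (simp add: D_def)
  have n4': "n - 4 \<noteq> 0" using n4 by (simp add: n_def)
  have U: "\<And>z. 0 < bubble_denom a z \<Longrightarrow> U_bubble a z = bubble_profile a C ((4 - n) / 2) z"
    using U_bubble_eq_bubble_profile[OF a] by (simp add: C_def c_def n_def)
  have Ux: "U_bubble a x = C * D powr ((4 - n) / 2)"
    using U[of x] D bubble_profile_sphere[OF x] bubble_denom_scaleR[OF x, of a 1] by (simp add: D_def)
  have e1: "(n - 4) / 2 * ((n + 2) / (n - 4)) = 3 + (n - 4) / 2"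
    and e2: "(4 - n) / 2 * ((n + 2) / (n - 4)) = (4 - n) / 2 - 3"
    using n4' by (simp_all add: field_simps)
  have "U_bubble a x powr ((n + 2) / (n - 4))
      = (c powr ((n - 4) / 2)) powr ((n + 2) / (n - 4))
        * (D powr ((4 - n) / 2)) powr ((n + 2) / (n - 4))"
    unfolding Ux C_def by (rule powr_mult; simp)
  also have "\<dots> = c powr (3 + (n - 4) / 2) * D powr ((4 - n) / 2 - 3)"
    by (simp only: powr_powr e1 e2)
  also have "\<dots> = C * c^3 * D powr ((4 - n) / 2 - 3)"
    using c by (simp add: powr_add powr_realpow C_def)
  finally have "U_bubble a x powr ((n + 2) / (n - 4)) = C * c^3 * D powr ((4 - n) / 2 - 3)" .
  moreover have "real CARD('n) = 4 - 2 * ((4 - n) / 2)" by (simp add: n_def field_simps)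
  note B33_bubble_profile[OF this a x U]
  ultimately show ?thesis by (simp add: n_def D_def c_def)
qed

theorem mainTheorem13:
  fixes a :: "real^'n::finite"
  assumes "CARD('n) \<ge> 3" and "CARD('n) \<noteq> 4" and "a \<in> ball 0 1"
  shows "smooth_on_closed_ball (U_bubble a)
    \<and> (\<forall>x\<in>cball 0 1. U_bubble a x > 0)
    \<and> (\<forall>x\<in>ball 0 1. laplacian (laplacian (U_bubble a)) x = 0)
    \<and> (\<forall>x\<in>sphere 0 1. radial_deriv (U_bubble a) x
           = - (real CARD('n) - 4) / 2 * U_bubble a x)
    \<and> (\<forall>x\<in>sphere 0 1. B33 (U_bubble a) x
           = real CARD('n) * (real CARD('n) - 2) * (real CARD('n) - 4) / 4
             * U_bubble a x powr ((real CARD('n) + 2) / (real CARD('n) - 4)))"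
proof -
  have a: "norm a < 1" using assms(3) by simp
  show ?thesis
    using smooth_on_closed_ball_U_bubble[OF a] U_bubble_pos[OF a] bilaplacian_U_bubble[OF a]
      radial_deriv_U_bubble[OF a] B33_U_bubble[OF a _ assms(2)]
    by simp
qed

end
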